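(* Let $\mathcal G$ be a random bipartite graph with parts $V_1$, $V_2$, $|V_1|=n$, $|V_2|=m$, $N=n+m$, where each pair with one vertex in $V_1$ and the other in $V_2$ is an edge independently with probability $p=(b\log N+c)/\sqrt{mn}$, where $b>0$ and $0\le c\le\log N$. Let $\gamma=n/m\ge1$ and $\kappa=\gamma^{1/4}$. If $b\ge\kappa^2$, then as $n,m\to\infty$, with probability at least $1-2e^{-\kappa^{-2}c}-O(N^{-2b})$ the graph $\mathcal G$ has exactly one connected component. Consequently, $\mathcal G$ is connected with probability tending to $1$ as $c\to\infty$.
   Context: $\log$ is the natural logarithm. *)

theory Defs
  imports Complex_Main
begin

text \<open>Bipartite graph with parts V1 = Inl ` {..<n} and V2 = Inr ` {..<m}.
  An edge set is a subset of the possible pairs {..<n} \<times> {..<m}.\<close>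

definition bip_pairs :: "nat \<Rightarrow> nat \<Rightarrow> (nat \<times> nat) set" where
  "bip_pairs n m = {..<n} \<times> {..<m}"

definition bip_vertices :: "nat \<Rightarrow> nat \<Rightarrow> (nat + nat) set" where
  "bip_vertices n m = Inl ` {..<n} \<union> Inr ` {..<m}"

definition bip_adj :: "(nat \<times> nat) set \<Rightarrow> ((nat + nat) \<times> (nat + nat)) set" where
  "bip_adj E = {(Inl i, Inr j) | i j. (i, j) \<in> E} \<union> {(Inr j, Inl i) | i j. (i, j) \<in> E}"

definition bip_components :: "nat \<Rightarrow> nat \<Rightarrow> (nat \<times> nat) set \<Rightarrow> (nat + nat) set set" where
  "bip_components n m E = (\<lambda>v. (bip_adj E)\<^sup>* `` {v}) ` bip_vertices n m"

definition bip_one_component_prob :: "nat \<Rightarrow> nat \<Rightarrow> real \<Rightarrow> real" where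
  "bip_one_component_prob n m p =
     (\<Sum>E\<in>Pow (bip_pairs n m).
        if card (bip_components n m E) = 1
        then p ^ card E * (1 - p) ^ (n * m - card E) else 0)"

definition kappa :: "nat \<Rightarrow> nat \<Rightarrow> real" where
  "kappa n m = (real n / real m) powr (1/4)"

end

theory Submission
  imports Defs "HOL-Real_Asymp.Real_Asymp"
begin

text \<open>If the graph has more than one component, its smallest component has at most N/2 vertices,
  say s in V1 and t in V2, and none of the s(m - t) + (n - s)t pairs joining it to the rest of the
  graph is an edge. By the union bound, the probability of this is at most the expected number of
  such isolated vertex sets, the sum of C(n,s) C(m,t) (1 - p)^(s(m - t) + (n - s)t) over all sizes.
  Single vertices contribute at most N e^(-pm) \<le> e^(-c/\<kappa>^2), because pm \<ge> ln N + c/\<kappa>^2.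
  While p(s + t) \<le> 1/4, the terms are dominated by those of e^(x + y) with x + y = O(N e^(-pm)),
  whose part of degree at least two is at most (x + y)^2 \<le> e^(-c/\<kappa>^2). Larger sets have a cut
  of size at least (s + t)m/2, so each of the at most N^2 remaining terms is at most e^(-sqrt N),
  and N^2 e^(-sqrt N) \<le> N^(-2b) once N is large.\<close>

section \<open>Isolated vertex sets of a disconnected graph\<close>

text \<open>The pair (A, B) stands for the vertex set Inl ` A \<union> Inr ` B; its cut consists of the vertex
  pairs with exactly one end in the set.\<close>

definition bip_cut :: "nat \<Rightarrow> nat \<Rightarrow> nat set \<Rightarrow> nat set \<Rightarrow> (nat \<times> nat) set" where
  "bip_cut n m A B = A \<times> ({..<m} - B) \<union> ({..<n} - A) \<times> B"

definition bip_small_sets :: "nat \<Rightarrow> nat \<Rightarrow> (nat set \<times> nat set) set" where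
  "bip_small_sets n m = {(A, B). A \<subseteq> {..<n} \<and> B \<subseteq> {..<m} \<and>
     1 \<le> card A + card B \<and> 2 * (card A + card B) \<le> n + m}"

lemma sym_bip_adj: "sym (bip_adj E)"
  unfolding bip_adj_def sym_def by blast

lemma rtrancl_Image_disjoint_if_sym:
  assumes "sym R" and "R\<^sup>* `` {v} \<noteq> R\<^sup>* `` {w}"
  shows "R\<^sup>* `` {v} \<inter> R\<^sup>* `` {w} = {}"
proof (rule ccontr)
  have eq: "equiv UNIV (R\<^sup>*)"
    using assms(1) unfolding equiv_def by (auto simp: refl_rtrancl sym_rtrancl trans_rtrancl)
  assume "R\<^sup>* `` {v} \<inter> R\<^sup>* `` {w} \<noteq> {}"
  then obtain x where "x \<in> R\<^sup>* `` {v} \<inter> R\<^sup>* `` {w}"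
    by blast
  then have "(v, w) \<in> R\<^sup>*"
    by (rule equiv_class_nondisjoint[OF eq])
  then have "R\<^sup>* `` {v} = R\<^sup>* `` {w}"
    by (rule equiv_class_eq[OF eq])
  with assms(2) show False ..
qed

lemma bip_component_subset:
  assumes "E \<subseteq> bip_pairs n m" and "v \<in> bip_vertices n m"
  shows "(bip_adj E)\<^sup>* `` {v} \<subseteq> bip_vertices n m"
proof -
  have "bip_adj E `` bip_vertices n m \<subseteq> bip_vertices n m"
    using assms(1) unfolding bip_adj_def bip_vertices_def bip_pairs_def by auto
  then have "(bip_adj E)\<^sup>* `` bip_vertices n m = bip_vertices n m"
    by (rule Image_closed_trancl)
  with assms(2) show ?thesis by blast
qed

lemma card_bip_vertices: "card (bip_vertices n m) = n + m"
  unfolding bip_vertices_def by (subst card_Un_disjoint) (auto simp: card_image)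

lemma card_vimage_Inl_Inr:
  fixes K :: "('a + 'b) set"
  assumes "finite K"
  shows "card K = card (Inl -` K) + card (Inr -` K)"
proof -
  have "K = Inl -` K <+> Inr -` K"
    by (auto simp: Plus_def image_iff) (metis sum.exhaust_sel)
  moreover have "finite (Inl -` K)" "finite (Inr -` K)"
    using assms by (simp_all add: finite_vimageI)
  ultimately show ?thesis
    by (metis card_Plus)
qed

lemma small_bip_component:
  assumes E: "E \<subseteq> bip_pairs n m" and "0 < n" and "card (bip_components n m E) \<noteq> 1"
  obtains v where "v \<in> bip_vertices n m" and "2 * card ((bip_adj E)\<^sup>* `` {v}) \<le> n + m"
proof -
  let ?K = "\<lambda>v. (bip_adj E)\<^sup>* `` {v}"
  have "finite (bip_components n m E)" and "bip_components n m E \<noteq> {}"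
    using \<open>0 < n\<close> unfolding bip_components_def bip_vertices_def by auto
  then obtain K1 where K1: "K1 \<in> bip_components n m E"
    by blast
  with assms(3) have "bip_components n m E \<noteq> {K1}"
    by auto
  with K1 obtain K2 where "K2 \<in> bip_components n m E" and "K2 \<noteq> K1"
    by blast
  with K1 obtain v w where v: "v \<in> bip_vertices n m" and w: "w \<in> bip_vertices n m"
    and neq: "?K v \<noteq> ?K w"
    unfolding bip_components_def by blast
  from neq have "?K v \<inter> ?K w = {}"
    by (rule rtrancl_Image_disjoint_if_sym[OF sym_bip_adj])
  moreover have "?K v \<subseteq> bip_vertices n m" "?K w \<subseteq> bip_vertices n m"
    using bip_component_subset[OF E] v w by auto
  moreover have "finite (bip_vertices n m)"
    unfolding bip_vertices_def by auto
  ultimately have "card (?K v) + card (?K w) \<le> n + m"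
    by (metis card_Un_disjoint card_bip_vertices card_mono le_sup_iff rev_finite_subset)
  then show thesis
    using that v w by (cases "card (?K v) \<le> card (?K w)") auto
qed

lemma bip_cut_disjoint_if_closed:
  assumes "E \<subseteq> bip_pairs n m" and "bip_adj E `` K \<subseteq> K"
  shows "E \<inter> bip_cut n m (Inl -` K) (Inr -` K) = {}"
  using assms unfolding bip_adj_def bip_pairs_def bip_cut_def by blast

lemma disconnected_imp_isolated_small_set:
  assumes E: "E \<subseteq> bip_pairs n m" and "0 < n" and "card (bip_components n m E) \<noteq> 1"
  shows "\<exists>(A, B)\<in>bip_small_sets n m. E \<inter> bip_cut n m A B = {}"
proof -
  obtain v where v: "v \<in> bip_vertices n m" and small: "2 * card ((bip_adj E)\<^sup>* `` {v}) \<le> n + m"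
    using small_bip_component[OF assms] .
  define K where "K = (bip_adj E)\<^sup>* `` {v}"
  have KV: "K \<subseteq> bip_vertices n m"
    unfolding K_def using bip_component_subset[OF E v] .
  then have "finite K"
    by (rule finite_subset) (auto simp: bip_vertices_def)
  moreover have "v \<in> K"
    unfolding K_def by simp
  ultimately have "card K \<ge> 1"
    by (metis card_0_eq empty_iff less_one not_le)
  moreover have "card K = card (Inl -` K) + card (Inr -` K)"
    using \<open>finite K\<close> by (rule card_vimage_Inl_Inr)
  moreover have "Inl -` K \<subseteq> {..<n}" "Inr -` K \<subseteq> {..<m}"
    using KV unfolding bip_vertices_def by auto
  ultimately have "(Inl -` K, Inr -` K) \<in> bip_small_sets n m"
    using small unfolding bip_small_sets_def K_def by auto
  moreover have "bip_adj E `` K \<subseteq> K"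
    unfolding K_def by (meson Image_singleton_iff rtrancl.rtrancl_into_rtrancl ImageE subsetI)
  ultimately show ?thesis
    using bip_cut_disjoint_if_closed[OF E] by blast
qed

lemma finite_bip_small_sets: "finite (bip_small_sets n m)"
proof (rule finite_subset)
  show "bip_small_sets n m \<subseteq> Pow {..<n} \<times> Pow {..<m}"
    unfolding bip_small_sets_def by auto
qed auto

lemma bip_cut_subset: "A \<subseteq> {..<n} \<Longrightarrow> B \<subseteq> {..<m} \<Longrightarrow> bip_cut n m A B \<subseteq> bip_pairs n m"
  unfolding bip_cut_def bip_pairs_def by auto

section \<open>The union bound\<close>

lemma sum_subset_weights_disjoint:
  fixes p :: real
  assumes P: "finite P" and F: "F \<subseteq> P"
  shows "(\<Sum>E\<in>{E\<in>Pow P. E \<inter> F = {}}. p ^ card E * (1 - p) ^ (card P - card E)) = (1 - p) ^ card F"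
proof -
  let ?A = "P - F"
  have fin_A: "finite ?A"
    using P by auto
  have card_P: "card P = card F + card ?A"
    using F P by (metis card_Diff_subset card_mono diff_add_inverse finite_subset le_add_diff_inverse)
  have "{E\<in>Pow P. E \<inter> F = {}} = Pow ?A"
    by auto
  then have "(\<Sum>E\<in>{E\<in>Pow P. E \<inter> F = {}}. p ^ card E * (1 - p) ^ (card P - card E))
      = (\<Sum>E\<in>Pow ?A. (1 - p) ^ card F * ((\<Prod>x\<in>E. p) * (\<Prod>x\<in>?A - E. 1 - p)))"
  proof (intro sum.cong)
    fix E assume "E \<in> Pow ?A"
    then have "E \<subseteq> ?A" "finite E"
      using fin_A finite_subset by auto
    then have "card P - card E = card F + card (?A - E)"
      using card_P card_mono[OF fin_A] by (simp add: card_Diff_subset)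
    then show "p ^ card E * (1 - p) ^ (card P - card E)
        = (1 - p) ^ card F * ((\<Prod>x\<in>E. p) * (\<Prod>x\<in>?A - E. 1 - p))"
      by (simp add: power_add)
  qed
  also have "\<dots> = (1 - p) ^ card F * (\<Sum>E\<in>Pow ?A. (\<Prod>x\<in>E. p) * (\<Prod>x\<in>?A - E. 1 - p))"
    by (simp add: sum_distrib_left)
  also have "(\<Sum>E\<in>Pow ?A. (\<Prod>x\<in>E. p) * (\<Prod>x\<in>?A - E. 1 - p)) = (\<Prod>x\<in>?A. p + (1 - p))"
    by (rule prod_add[OF fin_A, symmetric])
  finally show ?thesis
    by simp
qed

definition bip_edge_set_prob :: "nat \<Rightarrow> nat \<Rightarrow> real \<Rightarrow> (nat \<times> nat) set \<Rightarrow> real" where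
  "bip_edge_set_prob n m p E = p ^ card E * (1 - p) ^ (n * m - card E)"

lemma sum_bip_edge_set_prob_avoiding:
  assumes "F \<subseteq> bip_pairs n m"
  shows "(\<Sum>E\<in>Pow (bip_pairs n m). if E \<inter> F = {} then bip_edge_set_prob n m p E else 0)
    = (1 - p) ^ card F"
proof -
  have fin: "finite (bip_pairs n m)" and card: "card (bip_pairs n m) = n * m"
    unfolding bip_pairs_def by simp_all
  have "(\<Sum>E\<in>Pow (bip_pairs n m). if E \<inter> F = {} then bip_edge_set_prob n m p E else 0)
      = (\<Sum>E\<in>{E\<in>Pow (bip_pairs n m). E \<inter> F = {}}. bip_edge_set_prob n m p E)"
    by (simp only: sum.inter_filter fin finite_Pow_iff)
  then show ?thesis
    using sum_subset_weights_disjoint[OF fin assms, of p]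
    unfolding bip_edge_set_prob_def card by (simp only:)
qed

lemma bip_one_component_prob_eq:
  "bip_one_component_prob n m p = 1 - (\<Sum>E\<in>Pow (bip_pairs n m).
     if card (bip_components n m E) = 1 then 0 else bip_edge_set_prob n m p E)"
proof -
  have "(\<Sum>E\<in>Pow (bip_pairs n m). bip_edge_set_prob n m p E) = 1"
    using sum_bip_edge_set_prob_avoiding[of "{}" n m p] by simp
  moreover have "bip_one_component_prob n m p = (\<Sum>E\<in>Pow (bip_pairs n m). bip_edge_set_prob n m p E)
      - (\<Sum>E\<in>Pow (bip_pairs n m). if card (bip_components n m E) = 1 then 0 else bip_edge_set_prob n m p E)"
    unfolding bip_one_component_prob_def bip_edge_set_prob_def bip_pairs_def[symmetric]
      sum_subtractf[symmetric]
    by (rule sum.cong) auto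
  ultimately show ?thesis
    by simp
qed

lemma bip_one_component_prob_nonneg:
  fixes p :: real
  assumes "0 \<le> p" and "p \<le> 1"
  shows "0 \<le> bip_one_component_prob n m p"
  unfolding bip_one_component_prob_def using assms by (intro sum_nonneg) auto

lemma sum_disconnected_bip_edge_set_prob_le:
  fixes p :: real
  assumes "0 < n" and "0 \<le> p" and "p \<le> 1"
  shows "(\<Sum>E\<in>Pow (bip_pairs n m).
      if card (bip_components n m E) = 1 then 0 else bip_edge_set_prob n m p E)
    \<le> (\<Sum>(A, B)\<in>bip_small_sets n m. (1 - p) ^ card (bip_cut n m A B))"
proof -
  let ?P = "bip_pairs n m" and ?w = "bip_edge_set_prob n m p"
  let ?avoids = "\<lambda>E (A, B). E \<inter> bip_cut n m A B = {}"
  have w_nonneg: "0 \<le> ?w E" for E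
    unfolding bip_edge_set_prob_def using assms(2,3) by simp
  have "(if card (bip_components n m E) = 1 then 0 else ?w E)
      \<le> (\<Sum>X\<in>bip_small_sets n m. if ?avoids E X then ?w E else 0)" if "E \<in> Pow ?P" for E
  proof (cases "card (bip_components n m E) = 1")
    case False
    with that have "\<exists>X\<in>bip_small_sets n m. ?avoids E X"
      using disconnected_imp_isolated_small_set[OF _ \<open>0 < n\<close>, of E m] by simp
    then obtain X where "X \<in> bip_small_sets n m" and "?avoids E X"
      by blast
    then have "?w E \<le> (\<Sum>X\<in>bip_small_sets n m. if ?avoids E X then ?w E else 0)"
      using member_le_sum[of X "bip_small_sets n m" "\<lambda>X. if ?avoids E X then ?w E else 0"]
      by (simp add: w_nonneg finite_bip_small_sets)
    with False show ?thesis
      by simp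
  qed (simp add: sum_nonneg w_nonneg)
  then have "(\<Sum>E\<in>Pow ?P. if card (bip_components n m E) = 1 then 0 else ?w E)
      \<le> (\<Sum>E\<in>Pow ?P. \<Sum>X\<in>bip_small_sets n m. if ?avoids E X then ?w E else 0)"
    by (rule sum_mono)
  also have "\<dots> = (\<Sum>X\<in>bip_small_sets n m. \<Sum>E\<in>Pow ?P. if ?avoids E X then ?w E else 0)"
    by (rule sum.swap)
  also have "\<dots> = (\<Sum>(A, B)\<in>bip_small_sets n m. (1 - p) ^ card (bip_cut n m A B))"
  proof (rule sum.cong[OF refl], clarify)
    fix A B assume "(A, B) \<in> bip_small_sets n m"
    then have "bip_cut n m A B \<subseteq> ?P"
      by (intro bip_cut_subset) (auto simp: bip_small_sets_def)
    then show "(\<Sum>E\<in>Pow ?P. if E \<inter> bip_cut n m A B = {} then ?w E else 0)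
        = (1 - p) ^ card (bip_cut n m A B)"
      by (rule sum_bip_edge_set_prob_avoiding)
  qed
  finally show ?thesis .
qed

definition bip_small_sizes :: "nat \<Rightarrow> nat \<Rightarrow> (nat \<times> nat) set" where
  "bip_small_sizes n m = {(s, t). s \<le> n \<and> t \<le> m \<and> 1 \<le> s + t \<and> 2 * (s + t) \<le> n + m}"

text \<open>The expected number of vertex sets with s vertices in V1 and t in V2 that have an empty cut.\<close>

definition expected_isolated_sets :: "nat \<Rightarrow> nat \<Rightarrow> real \<Rightarrow> nat \<Rightarrow> nat \<Rightarrow> real" where
  "expected_isolated_sets n m p s t =
     real (n choose s) * real (m choose t) * (1 - p) ^ (s * (m - t) + (n - s) * t)"

lemma expected_isolated_sets_nonneg: "p \<le> 1 \<Longrightarrow> 0 \<le> expected_isolated_sets n m p s t"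
  unfolding expected_isolated_sets_def by simp

lemma finite_bip_small_sizes: "finite (bip_small_sizes n m)"
proof (rule finite_subset)
  show "bip_small_sizes n m \<subseteq> {..n} \<times> {..m}"
    unfolding bip_small_sizes_def by auto
qed auto

lemma card_bip_small_sizes_le:
  assumes "1 \<le> m" and "m \<le> n"
  shows "card (bip_small_sizes n m) \<le> (n + m)\<^sup>2"
proof -
  have "card (bip_small_sizes n m) \<le> card ({..n} \<times> {..m})"
    by (rule card_mono) (auto simp: bip_small_sizes_def)
  also have "\<dots> = n * m + n + m + 1"
    by (simp add: card_cartesian_product)
  also have "\<dots> \<le> n * n + 2 * (n * m) + m * m"
  proof -
    have "1 \<le> n * m"
      using assms by simp
    then show ?thesis
      using le_square[of n] le_square[of m] by linarith
  qed
  also have "\<dots> = (n + m)\<^sup>2"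
    by (simp add: power2_eq_square algebra_simps)
  finally show ?thesis .
qed

lemma card_bip_cut:
  assumes "A \<subseteq> {..<n}" and "B \<subseteq> {..<m}"
  shows "card (bip_cut n m A B) = card A * (m - card B) + (n - card A) * card B"
proof -
  have "finite A" "finite B"
    using assms finite_subset by auto
  then have "card (bip_cut n m A B) = card (A \<times> ({..<m} - B)) + card (({..<n} - A) \<times> B)"
    unfolding bip_cut_def by (intro card_Un_disjoint) auto
  with assms \<open>finite A\<close> \<open>finite B\<close> show ?thesis
    by (simp add: card_cartesian_product card_Diff_subset)
qed

lemma sum_bip_small_sets_by_card:
  fixes g :: "nat \<Rightarrow> nat \<Rightarrow> real"
  shows "(\<Sum>(A, B)\<in>bip_small_sets n m. g (card A) (card B))
       = (\<Sum>(s, t)\<in>bip_small_sizes n m. real (n choose s) * real (m choose t) * g s t)"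
proof -
  let ?h = "map_prod card card :: nat set \<times> nat set \<Rightarrow> nat \<times> nat"
  have "?h ` bip_small_sets n m \<subseteq> bip_small_sizes n m"
    unfolding bip_small_sets_def bip_small_sizes_def
    by (auto dest!: card_mono[OF finite_lessThan])
  then have "(\<Sum>(A, B)\<in>bip_small_sets n m. g (card A) (card B))
      = (\<Sum>y\<in>bip_small_sizes n m. \<Sum>(A, B)\<in>{X\<in>bip_small_sets n m. ?h X = y}. g (card A) (card B))"
    by (rule sum.group[OF finite_bip_small_sets finite_bip_small_sizes, symmetric])
  also have "\<dots> = (\<Sum>(s, t)\<in>bip_small_sizes n m. real (n choose s) * real (m choose t) * g s t)"
  proof (rule sum.cong[OF refl])
    fix y assume "y \<in> bip_small_sizes n m"
    moreover obtain s t where y: "y = (s, t)"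
      by fastforce
    ultimately have fiber: "{X\<in>bip_small_sets n m. ?h X = y}
        = {A. A \<subseteq> {..<n} \<and> card A = s} \<times> {B. B \<subseteq> {..<m} \<and> card B = t}"
      unfolding bip_small_sets_def bip_small_sizes_def by auto
    have "(\<Sum>(A, B)\<in>{X\<in>bip_small_sets n m. ?h X = y}. g (card A) (card B))
        = (\<Sum>X\<in>{X\<in>bip_small_sets n m. ?h X = y}. g s t)"
      by (rule sum.cong) (auto simp: y)
    then show "(\<Sum>(A, B)\<in>{X\<in>bip_small_sets n m. ?h X = y}. g (card A) (card B))
        = (case y of (s, t) \<Rightarrow> real (n choose s) * real (m choose t) * g s t)"
      unfolding fiber by (simp add: y card_cartesian_product n_subsets)
  qed
  finally show ?thesis .
qed

lemma bip_one_component_prob_ge_expected_isolated: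
  fixes p :: real
  assumes "0 < n" and "0 \<le> p" and "p \<le> 1"
  shows "1 - (\<Sum>(s, t)\<in>bip_small_sizes n m. expected_isolated_sets n m p s t)
    \<le> bip_one_component_prob n m p"
proof -
  have "(\<Sum>(A, B)\<in>bip_small_sets n m. (1 - p) ^ card (bip_cut n m A B))
      = (\<Sum>(A, B)\<in>bip_small_sets n m. (1 - p) ^ (card A * (m - card B) + (n - card A) * card B))"
    by (rule sum.cong) (auto simp: bip_small_sets_def card_bip_cut)
  also have "\<dots> = (\<Sum>(s, t)\<in>bip_small_sizes n m. expected_isolated_sets n m p s t)"
    unfolding expected_isolated_sets_def
    by (rule sum_bip_small_sets_by_card[where g = "\<lambda>s t. (1 - p) ^ (s * (m - t) + (n - s) * t)"])
  finally show ?thesis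
    using bip_one_component_prob_eq[of n m p] sum_disconnected_bip_edge_set_prob_le[OF assms, of m]
    by linarith
qed

lemma one_minus_power_le_exp:
  fixes p :: real
  assumes "p \<le> 1"
  shows "(1 - p) ^ k \<le> exp (- p * real k)"
proof -
  have "(1 - p) ^ k \<le> exp (- p) ^ k"
    using assms exp_minus_ge[of p] by (intro power_mono) auto
  then show ?thesis
    by (simp add: exp_of_nat_mult[symmetric] mult.commute)
qed

lemma sum_exp_series_le_exp:
  fixes x :: real
  assumes "0 \<le> x" and "finite I"
  shows "(\<Sum>k\<in>I. x ^ k / fact k) \<le> exp x"
proof -
  have "(\<lambda>k. x ^ k / fact k) sums exp x"
    using exp_converges[of x] by (simp add: divide_inverse mult.commute)
  then have sum: "summable (\<lambda>k. x ^ k / fact k)" and exp: "exp x = (\<Sum>k. x ^ k / fact k)"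
    by (simp_all add: sums_iff)
  show ?thesis
    unfolding exp by (rule sum_le_suminf[OF sum assms(2)]) (use assms(1) in auto)
qed

lemma pow_le_exp_mult_fact: "real k ^ k \<le> exp (real k) * fact k"
  using sum_exp_series_le_exp[of "real k" "{k}"] by (simp add: field_simps)

lemma binomial_le_pow_div_fact: "real (n choose k) \<le> real n ^ k / fact k"
proof -
  have "real ((n choose k) * fact k) \<le> real (n ^ k)"
    by (simp only: of_nat_le_iff binomial_fact_pow)
  then show ?thesis
    by (simp add: field_simps)
qed

lemma inverse_fact_mult_le: "1 / (fact s * fact t) \<le> (2::real) ^ (s + t) / fact (s + t)"
proof -
  have "fact s * fact t * ((s + t) choose s) = fact (s + t)"
    using binomial_fact_lemma[of s "s + t"] by simp
  then have "(fact (s + t) :: real) = fact s * fact t * real ((s + t) choose s)"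
    by (metis of_nat_fact of_nat_mult)
  also have "\<dots> \<le> fact s * fact t * 2 ^ (s + t)"
    by (rule mult_left_mono) (metis binomial_le_pow2 of_nat_le_iff of_nat_numeral of_nat_power, simp)
  finally show ?thesis
    by (simp add: field_simps)
qed

lemma pow_div_fact_le_exp_neg:
  fixes y :: real
  assumes "0 \<le> y" and "exp 2 * y \<le> real k"
  shows "y ^ k / fact k \<le> exp (- real k)"
proof (cases "k = 0")
  case False
  then have k: "0 < real k"
    by simp
  have "1 / fact k \<le> exp (real k) / real k ^ k"
    using pow_le_exp_mult_fact[of k] k by (simp add: field_simps)
  then have "y ^ k / fact k \<le> y ^ k * (exp (real k) / real k ^ k)"
    using assms(1) by (metis mult_left_mono times_divide_eq_right mult.right_neutral zero_le_power)
  also have "\<dots> = (exp 1 * y / real k) ^ k"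
    by (simp add: power_mult_distrib power_divide exp_of_nat_mult[symmetric])
  also have "\<dots> \<le> exp (- 1) ^ k"
  proof (rule power_mono)
    have "exp 1 * y \<le> real k * exp (- 1)"
      using assms(2) by (simp add: exp_minus field_simps exp_add[symmetric])
    then show "exp 1 * y / real k \<le> exp (- 1)"
      using k by (simp add: field_simps)
  qed (use assms(1) in simp)
  also have "\<dots> = exp (- real k)"
    by (simp add: exp_of_nat_mult[symmetric])
  finally show ?thesis .
qed simp

lemma sum_exp_series_product_tail:
  fixes x y :: real
  assumes "0 \<le> x" and "0 \<le> y" and "x + y \<le> 1" and "1 \<le> n" and "1 \<le> m"
  shows "(\<Sum>(s, t)\<in>{(s, t)\<in>{..n} \<times> {..m}. 2 \<le> s + t}. x ^ s / fact s * (y ^ t / fact t)) \<le> (x + y)\<^sup>2"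
proof -
  let ?h = "\<lambda>(s, t). x ^ s / fact s * (y ^ t / fact t)"
  let ?box = "{..n} \<times> {..m}"
  have low: "{(s, t)\<in>?box. \<not> 2 \<le> s + t} = {(0, 0), (1, 0), (0, 1)}"
    using assms(4,5) by auto
  have "sum ?h ?box = sum ?h {(s, t)\<in>?box. 2 \<le> s + t} + sum ?h {(s, t)\<in>?box. \<not> 2 \<le> s + t}"
    by (subst sum.Int_Diff[of _ _ "{(s, t). 2 \<le> s + t}"]) (auto intro!: arg_cong2[where f = "(+)"] sum.cong)
  also have "sum ?h {(s, t)\<in>?box. \<not> 2 \<le> s + t} = 1 + x + y"
    unfolding low by simp
  finally have "sum ?h {(s, t)\<in>?box. 2 \<le> s + t} = (\<Sum>s\<le>n. x ^ s / fact s) * (\<Sum>t\<le>m. y ^ t / fact t) - (1 + x + y)"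
    by (simp add: sum_product sum.cartesian_product)
  also have "\<dots> \<le> exp x * exp y - (1 + x + y)"
    using assms(1,2) by (intro diff_right_mono mult_mono sum_exp_series_le_exp sum_nonneg) auto
  also have "\<dots> \<le> (x + y)\<^sup>2"
    using exp_bound[of "x + y"] assms(1-3) by (simp add: exp_add)
  finally show ?thesis .
qed

lemma sum_union_le:
  fixes f :: "'a \<Rightarrow> 'b::ordered_ab_group_add"
  assumes "finite A" and "finite B" and "\<And>x. x \<in> A \<inter> B \<Longrightarrow> 0 \<le> f x"
  shows "sum f (A \<union> B) \<le> sum f A + sum f B"
  using sum_Un[OF assms(1,2), of f] sum_nonneg[of "A \<inter> B" f] assms(3) by simp

lemma cut_size_ge:
  fixes s t n m :: nat
  assumes "m \<le> n" and "s \<le> n" and "t \<le> m" and "2 * (s + t) \<le> n + m"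
  shows "real (s + t) * real m / 2 \<le> real (s * (m - t) + (n - s) * t)"
proof -
  have cut: "real (s * (m - t) + (n - s) * t) - real (s + t) * real m / 2
      = real s * (real m / 2 - 2 * real t) + real t * (real n - real m / 2)"
    using assms by (simp add: of_nat_diff field_simps)
  show ?thesis
  proof (cases "4 * t \<le> m")
    case True
    then have "0 \<le> real s * (real m / 2 - 2 * real t)"
      by simp
    moreover have "0 \<le> real t * (real n - real m / 2)"
      using assms(1) by simp
    ultimately show ?thesis
      using cut by linarith
  next
    case False
    \<comment> \<open>The first summand is now negative, and is smallest when s is as large as 2(s + t) \<le> n + m allows.\<close>
    have "real (2 * (s + t)) \<le> real (n + m)"
      using assms(4) by (simp only: of_nat_le_iff)
    then have "(real n + real m) / 2 - real t \<ge> real s"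
      by (simp add: field_simps)
    then have "real s * (real m / 2 - 2 * real t) \<ge> ((real n + real m) / 2 - real t) * (real m / 2 - 2 * real t)"
      using False by (intro mult_right_mono_neg) auto
    moreover have "real m * real m \<le> real n * real m"
      using assms(1) by (simp add: mult_right_mono)
    moreover have "0 \<le> (real t - real m / 2)\<^sup>2"
      by simp
    ultimately show ?thesis
      using cut by (simp add: power2_eq_square field_simps)
  qed
qed

section \<open>The expected number of isolated sets\<close>

lemma expected_isolated_sets_le_exp_series:
  fixes p :: real
  assumes p: "0 \<le> p" "p \<le> 1" and "s \<le> n" and "t \<le> m" and small: "p * real (s + t) \<le> 1/4"
  shows "expected_isolated_sets n m p s t
    \<le> (exp (1/4) * real n * exp (- p * real m)) ^ s / fact s
      * ((exp (1/4) * real m * exp (- p * real n)) ^ t / fact t)"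
proof -
  let ?c = "s * (m - t) + (n - s) * t"
  have "real ?c = real s * (real m - real t) + (real n - real s) * real t"
    using \<open>s \<le> n\<close> \<open>t \<le> m\<close> by (simp add: of_nat_diff)
  then have c: "real ?c = real s * real m + real t * real n - 2 * real s * real t"
    by (simp add: algebra_simps)
  \<comment> \<open>The quadratic part of the cut size costs at most e^((s + t)/4), since p(s + t) \<le> 1/4.\<close>
  have "4 * (real s * real t) \<le> (real s + real t)\<^sup>2"
    using sum_squares_ge_zero[of "real s - real t" 0] by (simp add: power2_eq_square algebra_simps)
  moreover have "p * (real s + real t) * (real s + real t) \<le> 1/4 * (real s + real t)"
    using small by (intro mult_right_mono) auto
  ultimately have "2 * p * (real s * real t) \<le> (real s + real t) / 4"
    using mult_left_mono[of _ _ p] p(1) by (fastforce simp: power2_eq_square algebra_simps)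
  then have "- p * real ?c \<le> real s * (1/4 - p * real m) + real t * (1/4 - p * real n)"
    unfolding c by (simp add: algebra_simps)
  then have "(1 - p) ^ ?c \<le> exp (real s * (1/4 - p * real m) + real t * (1/4 - p * real n))"
    using one_minus_power_le_exp[OF p(2), of ?c] by (meson exp_le_cancel_iff order_trans)
  also have "\<dots> = exp (1/4 - p * real m) ^ s * exp (1/4 - p * real n) ^ t"
    by (simp add: exp_add exp_of_nat_mult[symmetric])
  also have "\<dots> = (exp (1/4) * exp (- p * real m)) ^ s * (exp (1/4) * exp (- p * real n)) ^ t"
    by (simp add: exp_add[symmetric])
  finally have "(1 - p) ^ ?c \<le> (exp (1/4) * exp (- p * real m)) ^ s * (exp (1/4) * exp (- p * real n)) ^ t" .
  then have "expected_isolated_sets n m p s t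
      \<le> (real n ^ s / fact s) * (real m ^ t / fact t)
        * ((exp (1/4) * exp (- p * real m)) ^ s * (exp (1/4) * exp (- p * real n)) ^ t)"
    unfolding expected_isolated_sets_def using p
    by (intro mult_mono binomial_le_pow_div_fact) auto
  then show ?thesis
    by (simp add: power_mult_distrib field_simps)
qed

lemma expected_isolated_sets_le_sqrt_pow:
  fixes p :: real
  assumes p: "0 \<le> p" "p \<le> 1" and st: "m \<le> n" "s \<le> n" "t \<le> m" "2 * (s + t) \<le> n + m"
    and "0 < n + m" and log: "ln (real (n + m)) \<le> p * real m"
  shows "expected_isolated_sets n m p s t \<le> (2 * sqrt (real (n + m))) ^ (s + t) / fact (s + t)"
proof -
  define N where "N = real (n + m)"
  define k where "k = s + t"
  let ?c = "s * (m - t) + (n - s) * t"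
  have N: "0 < N"
    using \<open>0 < n + m\<close> unfolding N_def by (simp only: of_nat_0_less_iff)
  have "real k * ln N / 2 \<le> real k * (p * real m) / 2"
    using log unfolding N_def by (intro divide_right_mono mult_left_mono) auto
  also have "\<dots> = p * (real k * real m / 2)"
    by simp
  also have "\<dots> \<le> p * real ?c"
    using cut_size_ge[OF st] p(1) unfolding k_def by (intro mult_left_mono) auto
  finally have "exp (- p * real ?c) \<le> exp (- (real k * (ln N / 2)))"
    by simp
  then have "(1 - p) ^ ?c \<le> exp (- (real k * (ln N / 2)))"
    using one_minus_power_le_exp[OF p(2), of ?c] by linarith
  also have "\<dots> = (1 / sqrt N) ^ k"
    using N by (simp add: exp_of_nat_mult exp_minus ln_sqrt[symmetric] inverse_eq_divide power_one_over)
  finally have cut: "(1 - p) ^ ?c \<le> (1 / sqrt N) ^ k" .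
  have "real (n choose s) \<le> N ^ s / fact s"
    using binomial_le_pow_div_fact[of n s] unfolding N_def
    by (rule order_trans) (intro divide_right_mono power_mono, auto)
  moreover have "real (m choose t) \<le> N ^ t / fact t"
    using binomial_le_pow_div_fact[of m t] unfolding N_def
    by (rule order_trans) (intro divide_right_mono power_mono, auto)
  ultimately have "expected_isolated_sets n m p s t \<le> N ^ s / fact s * (N ^ t / fact t) * (1 / sqrt N) ^ k"
    unfolding expected_isolated_sets_def using cut p N by (intro mult_mono) auto
  also have "\<dots> = sqrt N ^ k * (1 / (fact s * fact t))"
    using N by (simp add: k_def power_add power_one_over field_simps flip: power_mult_distrib)
  also have "\<dots> \<le> sqrt N ^ k * (2 ^ k / fact k)"
    unfolding k_def using N by (intro mult_left_mono inverse_fact_mult_le) simp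
  finally show ?thesis
    by (simp add: k_def N_def power_mult_distrib mult.commute)
qed

lemma expected_isolated_vertices_le:
  fixes p :: real
  assumes "0 \<le> p" and "p \<le> 1" and "m \<le> n"
  shows "expected_isolated_sets n m p 1 0 + expected_isolated_sets n m p 0 1
    \<le> real (n + m) * exp (- p * real m)"
proof -
  have "exp (- p * real n) \<le> exp (- p * real m)"
    using assms(1,3) by (simp add: mult_left_mono)
  with one_minus_power_le_exp[OF assms(2), of n] have "(1 - p) ^ n \<le> exp (- p * real m)"
    by (rule order_trans)
  then have "real m * (1 - p) ^ n \<le> real m * exp (- p * real m)"
    by (rule mult_left_mono) simp
  moreover have "real n * (1 - p) ^ m \<le> real n * exp (- p * real m)"
    using one_minus_power_le_exp[OF assms(2), of m] by (intro mult_left_mono) auto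
  ultimately show ?thesis
    unfolding expected_isolated_sets_def by (simp add: algebra_simps)
qed

lemma sum_expected_isolated_sets_moderate_le_sq:
  fixes p :: real and n m :: nat
  defines "x \<equiv> exp (1/4) * real n * exp (- p * real m)" and "y \<equiv> exp (1/4) * real m * exp (- p * real n)"
  assumes "1 \<le> m" and "m \<le> n" and p: "0 \<le> p" "p \<le> 1" and "x + y \<le> 1"
  shows "(\<Sum>(s, t)\<in>{(s, t)\<in>bip_small_sizes n m. 2 \<le> s + t \<and> p * real (s + t) \<le> 1/4}.
      expected_isolated_sets n m p s t) \<le> (x + y)\<^sup>2"
proof -
  let ?box = "{(s, t)\<in>{..n} \<times> {..m}. 2 \<le> s + t}"
  have xy: "0 \<le> x" "0 \<le> y"
    unfolding x_def y_def by simp_all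
  have "finite ?box"
    by (rule finite_subset[of _ "{..n} \<times> {..m}"]) auto
  have "(\<Sum>(s, t)\<in>{(s, t)\<in>bip_small_sizes n m. 2 \<le> s + t \<and> p * real (s + t) \<le> 1/4}.
      expected_isolated_sets n m p s t)
      \<le> (\<Sum>(s, t)\<in>{(s, t)\<in>bip_small_sizes n m. 2 \<le> s + t \<and> p * real (s + t) \<le> 1/4}.
      x ^ s / fact s * (y ^ t / fact t))"
    using expected_isolated_sets_le_exp_series[OF p, of _ n _ m] unfolding x_def y_def
    by (intro sum_mono) (auto simp: bip_small_sizes_def)
  also have "\<dots> \<le> (\<Sum>(s, t)\<in>?box. x ^ s / fact s * (y ^ t / fact t))"
    using xy \<open>finite ?box\<close> by (intro sum_mono2) (auto simp: bip_small_sizes_def)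
  also have "\<dots> \<le> (x + y)\<^sup>2"
    using xy assms(3-4,7) by (intro sum_exp_series_product_tail) auto
  finally show ?thesis .
qed

lemma sum_expected_isolated_sets_moderate:
  fixes p \<mu> :: real
  assumes "1 \<le> m" and "m \<le> n" and p: "0 \<le> p" "p \<le> 1"
    and \<mu>: "real (n + m) * exp (- p * real m) \<le> \<mu>" "\<mu> \<le> 1/2"
  shows "(\<Sum>(s, t)\<in>{(s, t)\<in>bip_small_sizes n m. 2 \<le> s + t \<and> p * real (s + t) \<le> 1/4}.
      expected_isolated_sets n m p s t) \<le> \<mu>"
proof -
  define x where "x = exp (1/4) * real n * exp (- p * real m)"
  define y where "y = exp (1/4) * real m * exp (- p * real n)"
  have "exp (- p * real n) \<le> exp (- p * real m)"
    using assms(2) p(1) by (simp add: mult_left_mono)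
  then have "y \<le> exp (1/4) * real m * exp (- p * real m)"
    unfolding y_def by (intro mult_left_mono) auto
  then have "x + y \<le> exp (1/4) * (real (n + m) * exp (- p * real m))"
    unfolding x_def by (simp add: algebra_simps)
  also have "\<dots> \<le> exp (1/4) * \<mu>"
    using \<mu>(1) by simp
  finally have xy: "x + y \<le> exp (1/4) * \<mu>" .
  have "0 \<le> \<mu>"
    using \<mu>(1) by (meson order_trans mult_nonneg_nonneg of_nat_0_le_iff exp_ge_zero)
  have "exp (1/4 :: real) \<le> exp (1/2)"
    by simp
  with exp_half_le2 have "exp (1/4 :: real) \<le> 2"
    by linarith
  with \<mu>(2) \<open>0 \<le> \<mu>\<close> have "exp (1/4) * \<mu> \<le> 2 * (1/2)"
    by (intro mult_mono) auto
  with xy have "(x + y)\<^sup>2 \<le> (exp (1/4) * \<mu>)\<^sup>2" and "x + y \<le> 1"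
    unfolding x_def y_def by (auto intro: power_mono)
  moreover have "(exp (1/4) * \<mu>)\<^sup>2 = exp (1/2) * \<mu> * \<mu>"
    by (simp add: power2_eq_square exp_add[symmetric])
  moreover have "\<dots> \<le> 2 * (1/2) * \<mu>"
    using exp_half_le2 \<mu>(2) \<open>0 \<le> \<mu>\<close> by (intro mult_mono) auto
  ultimately show ?thesis
    using sum_expected_isolated_sets_moderate_le_sq[OF assms(1-4)] unfolding x_def y_def by fastforce
qed

lemma expected_isolated_sets_le_exp_neg_sqrt:
  fixes p :: real
  assumes "1 \<le> m" and "m \<le> n" and p: "0 \<le> p" "p \<le> 1"
    and log: "ln (real (n + m)) \<le> p * real m"
    and st: "s \<le> n" "t \<le> m" "2 * (s + t) \<le> n + m"
    and large: "2 * exp 2 * sqrt (real (n + m)) \<le> real (s + t)"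
  shows "expected_isolated_sets n m p s t \<le> exp (- sqrt (real (n + m)))"
proof -
  have "expected_isolated_sets n m p s t \<le> (2 * sqrt (real (n + m))) ^ (s + t) / fact (s + t)"
    using assms(1) by (intro expected_isolated_sets_le_sqrt_pow[OF p assms(2) st _ log]) auto
  also have "\<dots> \<le> exp (- real (s + t))"
    using large by (intro pow_div_fact_le_exp_neg) auto
  also have "\<dots> \<le> exp (- sqrt (real (n + m)))"
  proof -
    have "1 \<le> 2 * exp (2::real)"
      using exp_ge_add_one_self[of 2] by linarith
    then have "1 * sqrt (real (n + m)) \<le> (2 * exp 2) * sqrt (real (n + m))"
      by (intro mult_right_mono) auto
    with large show ?thesis
      by simp
  qed
  finally show ?thesis .
qed

lemma sum_expected_isolated_sets_large:
  fixes p :: real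
  assumes "1 \<le> m" and "m \<le> n" and p: "0 \<le> p" "p \<le> 1"
    and log: "ln (real (n + m)) \<le> p * real m"
    and large: "\<And>k::nat. 1/4 < p * real k \<Longrightarrow> 2 * exp 2 * sqrt (real (n + m)) \<le> real k"
  shows "(\<Sum>(s, t)\<in>{(s, t)\<in>bip_small_sizes n m. 1/4 < p * real (s + t)}. expected_isolated_sets n m p s t)
    \<le> (real (n + m))\<^sup>2 * exp (- sqrt (real (n + m)))"
proof -
  let ?N = "real (n + m)"
  let ?L = "{(s, t)\<in>bip_small_sizes n m. 1/4 < p * real (s + t)}"
  have "expected_isolated_sets n m p s t \<le> exp (- sqrt ?N)" if "(s, t) \<in> ?L" for s t
    using that large[of "s + t"]
    by (intro expected_isolated_sets_le_exp_neg_sqrt[OF assms(1-5)]) (auto simp: bip_small_sizes_def)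
  then have "(\<Sum>(s, t)\<in>?L. expected_isolated_sets n m p s t) \<le> (\<Sum>_\<in>?L. exp (- sqrt ?N))"
    by (intro sum_mono) auto
  also have "\<dots> = real (card ?L) * exp (- sqrt ?N)"
    by simp
  also have "\<dots> \<le> ?N\<^sup>2 * exp (- sqrt ?N)"
  proof (rule mult_right_mono)
    have "card ?L \<le> card (bip_small_sizes n m)"
      using finite_bip_small_sizes by (rule card_mono) auto
    also have "\<dots> \<le> (n + m)\<^sup>2"
      using assms(1,2) by (rule card_bip_small_sizes_le)
    finally show "real (card ?L) \<le> ?N\<^sup>2"
      by (simp only: of_nat_le_iff of_nat_power[symmetric])
  qed simp
  finally show ?thesis .
qed

lemma sum_expected_isolated_sets_le:
  fixes p \<mu> :: real
  assumes "1 \<le> m" and "m \<le> n" and p: "0 \<le> p" "p \<le> 1"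
    and \<mu>: "real (n + m) * exp (- p * real m) \<le> \<mu>" "\<mu> \<le> 1/2"
    and log: "ln (real (n + m)) \<le> p * real m"
    and large: "\<And>k::nat. 1/4 < p * real k \<Longrightarrow> 2 * exp 2 * sqrt (real (n + m)) \<le> real k"
  shows "(\<Sum>(s, t)\<in>bip_small_sizes n m. expected_isolated_sets n m p s t)
    \<le> 2 * \<mu> + (real (n + m))\<^sup>2 * exp (- sqrt (real (n + m)))"
proof -
  let ?S = "bip_small_sizes n m"
  let ?f = "\<lambda>(s, t). expected_isolated_sets n m p s t"
  let ?V = "{(1, 0), (0, 1)} :: (nat \<times> nat) set"
  let ?M = "{(s, t)\<in>?S. 2 \<le> s + t \<and> p * real (s + t) \<le> 1/4}"
  let ?L = "{(s, t)\<in>?S. 1/4 < p * real (s + t)}"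
  have f_nonneg: "0 \<le> ?f z" for z
    using expected_isolated_sets_nonneg[OF p(2)] by (simp split: prod.split)
  have "?M \<subseteq> ?S" and "?L \<subseteq> ?S"
    by auto
  then have fin: "finite ?M" "finite ?L"
    using finite_bip_small_sizes by (auto dest: finite_subset)
  have "?S \<subseteq> ?V \<union> (?M \<union> ?L)"
  proof
    fix z assume "z \<in> ?S"
    moreover obtain s t where z: "z = (s, t)"
      by fastforce
    ultimately have "s + t = 1 \<or> 2 \<le> s + t"
      unfolding bip_small_sizes_def by auto
    with \<open>z \<in> ?S\<close> show "z \<in> ?V \<union> (?M \<union> ?L)"
      unfolding z by (auto simp: add_is_1)
  qed
  then have "sum ?f ?S \<le> sum ?f (?V \<union> (?M \<union> ?L))"
    using fin f_nonneg by (intro sum_mono2) auto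
  also have "\<dots> \<le> sum ?f ?V + sum ?f (?M \<union> ?L)"
    using fin f_nonneg by (intro sum_union_le) auto
  also have "\<dots> \<le> sum ?f ?V + (sum ?f ?M + sum ?f ?L)"
    using fin f_nonneg by (intro add_left_mono sum_union_le) auto
  also have "sum ?f ?V = expected_isolated_sets n m p 1 0 + expected_isolated_sets n m p 0 1"
    by simp
  finally show ?thesis
    using expected_isolated_vertices_le[OF p assms(2)] \<mu>
      sum_expected_isolated_sets_moderate[OF assms(1,2) p \<mu>]
      sum_expected_isolated_sets_large[OF assms(1,2) p log large]
    by linarith
qed

section \<open>The edge probability of the theorem\<close>

lemma kappa_sq: "(kappa n m)\<^sup>2 = sqrt (real n / real m)"
proof -
  have "(kappa n m)\<^sup>2 = (real n / real m) powr (1/4 + 1/4)"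
    unfolding kappa_def power2_eq_square by (simp only: powr_add)
  then show ?thesis
    by (simp add: powr_half_sqrt)
qed

lemma kappa_sq_ge_1: "0 < m \<Longrightarrow> m \<le> n \<Longrightarrow> 1 \<le> (kappa n m)\<^sup>2"
  unfolding kappa_sq by simp

lemma sqrt_mult_eq_kappa_sq: "0 < m \<Longrightarrow> sqrt (real m * real n) = (kappa n m)\<^sup>2 * real m"
proof -
  assume "0 < m"
  then have "real m * real n = real n / real m * (real m)\<^sup>2"
    by (simp add: power2_eq_square)
  then have "sqrt (real m * real n) = sqrt (real n / real m) * sqrt ((real m)\<^sup>2)"
    by (simp only: real_sqrt_mult)
  then show ?thesis
    unfolding kappa_sq by simp
qed

lemma le_sq_mult_if_kappa_sq_le:
  assumes "0 < m" and "(kappa n m)\<^sup>2 \<le> b"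
  shows "real n \<le> b\<^sup>2 * real m"
proof -
  have "real n / real m = ((kappa n m)\<^sup>2)\<^sup>2"
    unfolding kappa_sq by simp
  also have "\<dots> \<le> b\<^sup>2"
    using assms(2) by (intro power_mono) simp_all
  finally show ?thesis
    using assms(1) by (simp add: field_simps)
qed

definition edge_prob :: "real \<Rightarrow> real \<Rightarrow> nat \<Rightarrow> nat \<Rightarrow> real" where
  "edge_prob b c n m = (b * ln (real (n + m)) + c) / sqrt (real m * real n)"

lemma edge_prob_mult_ge:
  assumes "0 < m" and "m \<le> n" and "0 \<le> c" and "(kappa n m)\<^sup>2 \<le> b"
  shows "ln (real (n + m)) + c / (kappa n m)\<^sup>2 \<le> edge_prob b c n m * real m"
proof -
  let ?N = "real (n + m)" and ?k = "(kappa n m)\<^sup>2"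
  have k: "1 \<le> ?k"
    using assms(1,2) by (rule kappa_sq_ge_1)
  have "0 \<le> ln ?N"
    using assms(1) by simp
  moreover have "1 \<le> b / ?k"
    using k assms(4) by (auto simp: le_divide_eq_1)
  ultimately have "ln ?N * 1 \<le> ln ?N * (b / ?k)"
    by (intro mult_left_mono)
  moreover have "edge_prob b c n m * real m = (b * ln ?N + c) / ?k"
  proof -
    have "?k \<noteq> 0"
      using k by linarith
    with assms(1) show ?thesis
      unfolding edge_prob_def sqrt_mult_eq_kappa_sq[OF assms(1)] by (simp add: field_simps)
  qed
  ultimately show ?thesis
    by (simp add: add_divide_distrib mult.commute)
qed

lemma edge_prob_le:
  assumes "0 < m" and "m \<le> n" and "0 < b" and "c \<le> ln (real (n + m))" and "(kappa n m)\<^sup>2 \<le> b"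
  shows "edge_prob b c n m \<le> (b + 1) * (b\<^sup>2 + 1) * ln (real (n + m)) / real (n + m)"
proof -
  let ?N = "real (n + m)" and ?k = "(kappa n m)\<^sup>2"
  have k: "1 \<le> ?k"
    using assms(1,2) by (rule kappa_sq_ge_1)
  have ln: "0 \<le> ln ?N"
    using assms(1) by simp
  have "b * ln ?N + c \<le> (b + 1) * ln ?N"
    using assms(4) by (simp add: algebra_simps)
  moreover have "0 \<le> ?k * real m"
    using k by simp
  ultimately have "edge_prob b c n m \<le> (b + 1) * ln ?N / (?k * real m)"
    unfolding edge_prob_def sqrt_mult_eq_kappa_sq[OF assms(1)] by (rule divide_right_mono)
  also have "\<dots> \<le> (b + 1) * ln ?N / real m"
    using k assms(1,3) ln by (intro divide_left_mono mult_pos_pos) (auto simp: mult_le_cancel_right1)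
  also have "\<dots> \<le> (b + 1) * ln ?N * ((b\<^sup>2 + 1) / ?N)"
  proof -
    have "?N \<le> (b\<^sup>2 + 1) * real m"
      using le_sq_mult_if_kappa_sq_le[OF assms(1,5)] by (simp add: algebra_simps)
    then have "1 / real m \<le> (b\<^sup>2 + 1) / ?N"
      using assms(1) by (simp add: field_simps)
    then show ?thesis
      using assms(3) ln by (simp add: divide_inverse mult_left_mono)
  qed
  finally show ?thesis
    by (simp add: mult_ac)
qed

lemma sq_mult_exp_neg_sqrt_le_powr:
  fixes N b :: real
  assumes "0 < N" and "(2 + 2 * b) * ln N \<le> sqrt N"
  shows "N\<^sup>2 * exp (- sqrt N) \<le> N powr (- 2 * b)"
proof -
  have "N powr (2 + 2 * b) \<le> exp (sqrt N)"
    using assms by (simp add: powr_def)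
  then have "N powr (2 + 2 * b) * exp (- sqrt N) \<le> 1"
    by (simp add: exp_minus field_simps)
  moreover have "N\<^sup>2 = N powr (- 2 * b) * N powr (2 + 2 * b)"
    using assms(1) by (simp add: powr_add[symmetric] flip: powr_numeral)
  ultimately show ?thesis
    by (simp add: mult.assoc mult_left_le)
qed

lemma large_size_if_edge_prob_exceeds:
  fixes p B N :: real
  assumes "0 < N" and "p \<le> B * ln N / N" and "8 * exp 2 * B * ln N \<le> sqrt N"
    and "1/4 < p * real k"
  shows "2 * exp 2 * sqrt N \<le> real k"
proof -
  have "N * (1/4) < N * (p * real k)"
    using assms(1,4) by (intro mult_strict_left_mono)
  also have "\<dots> \<le> B * ln N * real k"
  proof -
    have "N * p \<le> B * ln N"
      using assms(1,2) by (simp add: field_simps)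
    then show ?thesis
      using mult_right_mono[of "N * p" "B * ln N" "real k"] by (simp add: mult.assoc)
  qed
  finally have "N < 4 * B * ln N * real k"
    by simp
  moreover have "4 * B * ln N * (2 * exp 2 * sqrt N) \<le> N"
    using mult_right_mono[OF assms(3), of "sqrt N"] assms(1) by (simp add: algebra_simps)
  ultimately have "4 * B * ln N * (2 * exp 2 * sqrt N) < 4 * B * ln N * real k"
    by linarith
  moreover have "0 < 4 * B * ln N"
    using \<open>N < 4 * B * ln N * real k\<close> assms(1) by (smt (verit) mult_nonpos_nonneg of_nat_0_le_iff)
  ultimately show ?thesis
    by (simp only: mult_less_cancel_left_pos less_imp_le)
qed

lemma edge_prob_bounds:
  fixes b c :: real and n m :: nat
  defines "N \<equiv> real (n + m)" and "p \<equiv> edge_prob b c n m"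
  assumes "0 < b" and "1 \<le> m" and "m \<le> n" and "0 \<le> c" and "c \<le> ln N" and "(kappa n m)\<^sup>2 \<le> b"
    and large_N: "8 * exp 2 * ((b + 1) * (b\<^sup>2 + 1)) * ln N \<le> sqrt N"
  shows "0 \<le> p" and "p \<le> 1" and "N * exp (- p * real m) \<le> exp (- c / (kappa n m)\<^sup>2)"
    and "ln N \<le> p * real m" and "\<And>k. 1/4 < p * real k \<Longrightarrow> 2 * exp 2 * sqrt N \<le> real k"
proof -
  define B where "B = (b + 1) * (b\<^sup>2 + 1)"
  have m: "0 < m"
    using assms(4) by simp
  have N: "2 \<le> N" "0 < ln N"
    using assms(4,5) unfolding N_def by simp_all
  show "0 \<le> p"
    using assms(3,6) N(2) unfolding p_def edge_prob_def N_def by simp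
  have pB: "p \<le> B * ln N / N"
    using edge_prob_le[OF m assms(5,3) assms(7,8)[unfolded N_def]] unfolding p_def N_def B_def .
  have "1 * 1 \<le> B"
    unfolding B_def using assms(3) by (intro mult_mono) auto
  moreover have "1 \<le> 8 * exp (2::real)"
    using exp_ge_add_one_self[of 2] by linarith
  ultimately have "1 * B \<le> 8 * exp 2 * B"
    by (intro mult_right_mono) auto
  then have "B * ln N \<le> sqrt N"
    using large_N N(2) mult_right_mono[of B "8 * exp 2 * B" "ln N"] unfolding B_def by simp
  moreover have "sqrt N * 1 \<le> sqrt N * sqrt N"
    using N(1) by (intro mult_left_mono real_sqrt_ge_one) auto
  ultimately have "B * ln N / N \<le> 1"
    using N(1) by simp
  with pB show "p \<le> 1"
    by linarith
  have pm: "ln N + c / (kappa n m)\<^sup>2 \<le> p * real m"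
    unfolding p_def N_def by (rule edge_prob_mult_ge[OF m assms(5,6,8)])
  have "N * exp (- p * real m) \<le> N * exp (- ln N - c / (kappa n m)\<^sup>2)"
    using pm N by simp
  also have "\<dots> = exp (- c / (kappa n m)\<^sup>2)"
    using N by (simp add: exp_diff exp_minus field_simps)
  finally show "N * exp (- p * real m) \<le> exp (- c / (kappa n m)\<^sup>2)" .
  have "0 \<le> c / (kappa n m)\<^sup>2"
    using assms(6) by simp
  with pm show "ln N \<le> p * real m"
    by linarith
  show "2 * exp 2 * sqrt N \<le> real k" if "1/4 < p * real k" for k
    using N pB large_N that unfolding B_def
    by (intro large_size_if_edge_prob_exceeds[where B = B]) (auto simp: B_def mult_ac)
qed

lemma bip_one_component_prob_lower_bound:
  fixes b c :: real
  assumes "0 < b" and "1 \<le> m" and "m \<le> n" and "0 \<le> c" and "c \<le> ln (real (n + m))"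
    and "(kappa n m)\<^sup>2 \<le> b"
    and "8 * exp 2 * ((b + 1) * (b\<^sup>2 + 1)) * ln (real (n + m)) \<le> sqrt (real (n + m))"
    and "(2 + 2 * b) * ln (real (n + m)) \<le> sqrt (real (n + m))"
  shows "1 - 2 * exp (- c / (kappa n m)\<^sup>2) - real (n + m) powr (- 2 * b)
    \<le> bip_one_component_prob n m (edge_prob b c n m)"
proof -
  let ?N = "real (n + m)" and ?p = "edge_prob b c n m" and ?\<mu> = "exp (- c / (kappa n m)\<^sup>2)"
  note p = edge_prob_bounds[OF assms(1-7)]
  have tail: "?N\<^sup>2 * exp (- sqrt ?N) \<le> ?N powr (- 2 * b)"
    using assms(2,8) by (intro sq_mult_exp_neg_sqrt_le_powr) auto
  have "0 < n"
    using assms(2,3) by simp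
  show ?thesis
  proof (cases "?\<mu> \<le> 1/2")
    case True
    with assms(2,3) p have "(\<Sum>(s, t)\<in>bip_small_sizes n m. expected_isolated_sets n m ?p s t)
        \<le> 2 * ?\<mu> + ?N\<^sup>2 * exp (- sqrt ?N)"
      by (intro sum_expected_isolated_sets_le) auto
    with tail bip_one_component_prob_ge_expected_isolated[OF \<open>0 < n\<close> p(1,2), of m] show ?thesis
      by linarith
  next
    case False
    moreover have "0 \<le> ?N powr (- 2 * b)"
      by simp
    ultimately show ?thesis
      using bip_one_component_prob_nonneg[OF p(1,2), of n m] by linarith
  qed
qed

lemma eventually_mult_ln_le_sqrt: "\<exists>M. \<forall>x\<ge>M. K * ln x \<le> sqrt (x :: real)"
proof -
  have "eventually (\<lambda>x. K * ln x \<le> sqrt x) at_top"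
    by real_asymp
  then show ?thesis
    by (simp add: eventually_at_top_linorder)
qed

lemma bip_one_component_prob_lower_bound_eventually:
  fixes b :: real
  assumes "0 < b"
  shows "\<exists>M0. \<forall>n m c. M0 \<le> n \<and> M0 \<le> m \<and> m \<le> n \<and> 0 \<le> c \<and> c \<le> ln (real (n + m))
    \<and> (kappa n m)\<^sup>2 \<le> b \<longrightarrow>
      1 - 2 * exp (- c / (kappa n m)\<^sup>2) - real (n + m) powr (- 2 * b)
        \<le> bip_one_component_prob n m (edge_prob b c n m)"
proof -
  obtain M1 where M1: "\<And>x. M1 \<le> x \<Longrightarrow> 8 * exp 2 * ((b + 1) * (b\<^sup>2 + 1)) * ln x \<le> sqrt x"
    using eventually_mult_ln_le_sqrt by blast
  obtain M2 where M2: "\<And>x. M2 \<le> x \<Longrightarrow> (2 + 2 * b) * ln x \<le> sqrt x"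
    using eventually_mult_ln_le_sqrt by blast
  show ?thesis
  proof (intro exI[of _ "nat \<lceil>max (max M1 M2) 1\<rceil>"] allI impI, elim conjE)
    fix n m :: nat and c :: real
    assume H: "nat \<lceil>max (max M1 M2) 1\<rceil> \<le> n" "nat \<lceil>max (max M1 M2) 1\<rceil> \<le> m" "m \<le> n" "0 \<le> c"
      "c \<le> ln (real (n + m))" "(kappa n m)\<^sup>2 \<le> b"
    then have "1 \<le> m" and "M1 \<le> real (n + m)" and "M2 \<le> real (n + m)"
      by linarith+
    with H M1 M2 show "1 - 2 * exp (- c / (kappa n m)\<^sup>2) - real (n + m) powr (- 2 * b)
        \<le> bip_one_component_prob n m (edge_prob b c n m)"
      by (intro bip_one_component_prob_lower_bound[OF assms]) auto
  qed
qed

lemma connectivity_error_le: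
  fixes \<epsilon> b c k N :: real
  assumes "0 < \<epsilon>" and "1 \<le> k" and "k \<le> b" and "0 \<le> c" and "b * ln (4 / \<epsilon>) \<le> c"
    and "1 \<le> N" and "2 / \<epsilon> \<le> N"
  shows "2 * exp (- c / k) + N powr (- 2 * b) \<le> \<epsilon>"
proof -
  have "ln (4 / \<epsilon>) \<le> c / b"
    using assms(2,3,5) by (simp add: field_simps)
  also have "\<dots> \<le> c / k"
    using assms(2-4) by (intro divide_left_mono) auto
  finally have "exp (- c / k) \<le> exp (- ln (4 / \<epsilon>))"
    by simp
  also have "\<dots> = \<epsilon> / 4"
    using assms(1) by (simp add: exp_minus)
  finally have "exp (- c / k) \<le> \<epsilon> / 4" .
  moreover have "N powr (- 2 * b) \<le> N powr (- 1)"
    using assms(2,3,6) by (intro powr_mono) auto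
  moreover have "N powr (- 1) \<le> \<epsilon> / 2"
    using assms(1,6,7) by (simp add: powr_minus_divide field_simps)
  ultimately show ?thesis
    by linarith
qed

lemma bip_one_component_prob_ge_1_minus:
  fixes b \<epsilon> :: real
  assumes "0 < b" and "0 < \<epsilon>"
  shows "\<exists>c0 M0. \<forall>n m c. M0 \<le> n \<and> M0 \<le> m \<and> m \<le> n \<and> c0 \<le> c \<and> 0 \<le> c
    \<and> c \<le> ln (real (n + m)) \<and> (kappa n m)\<^sup>2 \<le> b \<longrightarrow> 1 - \<epsilon> \<le> bip_one_component_prob n m (edge_prob b c n m)"
proof -
  obtain M0 where M0: "\<forall>n m c. M0 \<le> n \<and> M0 \<le> m \<and> m \<le> n \<and> 0 \<le> c \<and> c \<le> ln (real (n + m))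
      \<and> (kappa n m)\<^sup>2 \<le> b \<longrightarrow>
        1 - 2 * exp (- c / (kappa n m)\<^sup>2) - real (n + m) powr (- 2 * b)
          \<le> bip_one_component_prob n m (edge_prob b c n m)"
    using bip_one_component_prob_lower_bound_eventually[OF assms(1)] by blast
  show ?thesis
  proof (intro exI[of _ "b * ln (4 / \<epsilon>)"] exI[of _ "max M0 (nat \<lceil>2 / \<epsilon>\<rceil> + 1)"] allI impI, elim conjE)
    fix n m :: nat and c :: real
    assume H: "max M0 (nat \<lceil>2 / \<epsilon>\<rceil> + 1) \<le> n" "max M0 (nat \<lceil>2 / \<epsilon>\<rceil> + 1) \<le> m" "m \<le> n"
      "b * ln (4 / \<epsilon>) \<le> c" "0 \<le> c" "c \<le> ln (real (n + m))" "(kappa n m)\<^sup>2 \<le> b"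
    then have "1 \<le> (kappa n m)\<^sup>2"
      by (intro kappa_sq_ge_1) auto
    moreover have "1 \<le> real (n + m)" "2 / \<epsilon> \<le> real (n + m)"
      using H(1,2) by linarith+
    ultimately have "2 * exp (- c / (kappa n m)\<^sup>2) + real (n + m) powr (- 2 * b) \<le> \<epsilon>"
      using H assms(2) by (intro connectivity_error_le) auto
    moreover have "1 - 2 * exp (- c / (kappa n m)\<^sup>2) - real (n + m) powr (- 2 * b)
        \<le> bip_one_component_prob n m (edge_prob b c n m)"
      using M0 H by simp
    ultimately show "1 - \<epsilon> \<le> bip_one_component_prob n m (edge_prob b c n m)"
      by linarith
  qed
qed

theorem lemmaA1:
  fixes b :: real
  assumes "b > 0"
  shows "(\<exists>C M0. \<forall>n m c. M0 \<le> n \<and> M0 \<le> m \<and> m \<le> n \<and> 0 \<le> c \<and> c \<le> ln (real (n + m))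
            \<and> (kappa n m)\<^sup>2 \<le> b \<longrightarrow>
           1 - 2 * exp (- c / (kappa n m)\<^sup>2) - C * real (n + m) powr (- 2 * b)
             \<le> bip_one_component_prob n m ((b * ln (real (n + m)) + c) / sqrt (real m * real n)))
       \<and> (\<forall>\<epsilon>>0. \<exists>c0 M0. \<forall>n m c. M0 \<le> n \<and> M0 \<le> m \<and> m \<le> n \<and> c0 \<le> c \<and> 0 \<le> c
            \<and> c \<le> ln (real (n + m)) \<and> (kappa n m)\<^sup>2 \<le> b \<longrightarrow>
           1 - \<epsilon> \<le> bip_one_component_prob n m ((b * ln (real (n + m)) + c) / sqrt (real m * real n)))"
proof -
  obtain M0 where "\<forall>n m c. M0 \<le> n \<and> M0 \<le> m \<and> m \<le> n \<and> 0 \<le> c \<and> c \<le> ln (real (n + m))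
      \<and> (kappa n m)\<^sup>2 \<le> b \<longrightarrow>
        1 - 2 * exp (- c / (kappa n m)\<^sup>2) - real (n + m) powr (- 2 * b)
          \<le> bip_one_component_prob n m (edge_prob b c n m)"
    using bip_one_component_prob_lower_bound_eventually[OF assms] by blast
  then show ?thesis
    using bip_one_component_prob_ge_1_minus[OF assms]
    unfolding edge_prob_def by (intro conjI exI[of _ M0] exI[of _ 1]) auto
qed

end
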